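(* Let $r\in\mathbb{R}$. For all integers $n,m,k\ge 0$ with $n\ge m+k$, \[ \binom{k+m}{m} S_2(n,m+k) = \sum_{n_1=m}^n \sum_{l=0}^m \sum_{j=0}^k \binom{n_1}{l}\binom{n-n_1}{j}\binom{n}{n_1} (-1)^{l+j} r^{l+j} S_{2,r}(n_1-l,m-l)\, S_{2,r}(n-n_1-j,k-j). \]
   Context: $S_2(n,k)$ denotes the Stirling numbers of the second kind, $\frac{1}{k!}(e^t-1)^k = \sum_{n\ge k} S_2(n,k)\frac{t^n}{n!}$. For $r\in\mathbb{R}$ and integer $k\ge 0$, the extended Stirling numbers of the second kind $S_{2,r}(n,k)$ are defined by $\frac{1}{k!}(e^t-1+rt)^k = \sum_{n=k}^\infty S_{2,r}(n,k)\frac{t^n}{n!}$, with $S_{2,r}(a,b)=0$ whenever $a<b$, and $\binom{a}{b}=0$ for $b>a$. *)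

theory Defs
  imports "HOL-Combinatorics.Stirling" "HOL-Computational_Algebra.Formal_Power_Series"
begin

text \<open>The arguments are integers; the value is 0 if either argument is negative
 (in particular S_{2,r}(a,b) = 0 whenever a < b, which also follows from the
 generating function for a, b >= 0).\<close>

definition ext_stirling2 :: "real \<Rightarrow> int \<Rightarrow> int \<Rightarrow> real" where
  "ext_stirling2 r a b =
     (if a < 0 \<or> b < 0 then 0
      else fact (nat a) / fact (nat b) *
           fps_nth ((fps_exp 1 - 1 + fps_const r * fps_X) ^ nat b) (nat a))"

end

theory Submission
  imports Defs
begin

text \<open>Writing \<open>e\<^sup>t - 1 = (e\<^sup>t - 1 + r t) - r t\<close> and expanding the \<open>m\<close>-th power binomially expresses
  \<open>S\<^sub>2(n, m)\<close> as an alternating sum of extended Stirling numbers. On the other hand, comparing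
  coefficients in \<open>(e\<^sup>t - 1)\<^bsup>m+k\<^esup> = (e\<^sup>t - 1)\<^sup>m (e\<^sup>t - 1)\<^sup>k\<close> gives the convolution
  \<open>C(k+m, m) S\<^sub>2(n, m+k) = \<Sum>\<^sub>i C(n, i) S\<^sub>2(i, m) S\<^sub>2(n-i, k)\<close>; substituting the first expansion
  into both factors of each summand yields the identity.\<close>

unbundle fps_syntax

lemma fps_deriv_exp_minus_one_power:
  "fps_deriv ((fps_exp (1::'a::field_char_0) - 1) ^ Suc j) =
     of_nat (Suc j) * ((fps_exp 1 - 1) ^ Suc j + (fps_exp 1 - 1) ^ j)"
proof -
  have "fps_deriv ((fps_exp (1::'a) - 1) ^ Suc j) =
      of_nat (Suc j) * fps_deriv (fps_exp 1 - 1) * (fps_exp 1 - 1) ^ j"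
    by (simp only: fps_deriv_power') simp
  also have "fps_deriv (fps_exp (1::'a) - 1) = (fps_exp 1 - 1) + 1"
    by simp
  finally show ?thesis
    by (simp add: algebra_simps)
qed

lemma fact_mult_fps_exp_minus_one_power_nth:
  "fact n * ((fps_exp (1::'a::field_char_0) - 1) ^ m) $ n = fact m * of_nat (Stirling n m)"
proof (induction n arbitrary: m)
  case 0
  then show ?case
    by (cases m) (simp_all add: fps_nth_power_0)
next
  case (Suc n)
  show ?case
  proof (cases m)
    case 0
    then show ?thesis by simp
  next
    case (Suc j)
    let ?X = "fps_exp (1::'a) - 1"
    have deriv_nth: "of_nat (Suc n) * (?X ^ Suc j) $ Suc n = of_nat (Suc j) * ((?X ^ Suc j) $ n + (?X ^ j) $ n)"
      using arg_cong[OF fps_deriv_exp_minus_one_power, of "\<lambda>f. f $ n" j]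
      by (simp only: fps_deriv_nth fps_mult_of_nat_nth(1) fps_add_nth Suc_eq_plus1)
    have "fact (Suc n) * (?X ^ Suc j) $ Suc n = fact n * (of_nat (Suc n) * (?X ^ Suc j) $ Suc n)"
      by (simp only: fact_Suc mult_ac)
    also have "\<dots> = of_nat (Suc j) * (fact n * (?X ^ Suc j) $ n + fact n * (?X ^ j) $ n)"
      by (simp only: deriv_nth distrib_left mult.left_commute)
    also have "\<dots> = of_nat (Suc j) * (fact (Suc j) * of_nat (Stirling n (Suc j)) + fact j * of_nat (Stirling n j))"
      by (simp only: Suc.IH)
    also have "\<dots> = fact (Suc j) * of_nat (Stirling (Suc n) (Suc j))"
      by (simp add: algebra_simps)
    finally show ?thesis
      using Suc by simp
  qed
qed

lemma fps_exp_minus_one_power_nth: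
  "((fps_exp (1::'a::field_char_0) - 1) ^ m) $ n = fact m * of_nat (Stirling n m) / fact n"
  using fact_mult_fps_exp_minus_one_power_nth[of n m] by (simp add: field_simps)

lemma Stirling_convolution:
  "of_nat ((k + m) choose m) * of_nat (Stirling n (m + k)) =
     (\<Sum>i=0..n. of_nat (n choose i) * of_nat (Stirling i m) * (of_nat (Stirling (n - i) k) :: 'a::field_char_0))"
proof -
  let ?X = "fps_exp (1::'a) - 1"
  have "of_nat ((k + m) choose m) * of_nat (Stirling n (m + k)) =
      fact n / (fact m * fact k) * (fact (m + k) * of_nat (Stirling n (m + k)) / (fact n :: 'a))"
    by (simp add: binomial_fact add.commute)
  also have "fact (m + k) * of_nat (Stirling n (m + k)) / fact n =
      (\<Sum>i=0..n. (fact m * of_nat (Stirling i m) / fact i) * (fact k * of_nat (Stirling (n - i) k) / (fact (n - i) :: 'a)))"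
    using arg_cong[OF power_add[of ?X m k], of "\<lambda>f. f $ n"]
    by (simp only: fps_mult_nth fps_exp_minus_one_power_nth)
  also have "fact n / (fact m * fact k) * \<dots> =
      (\<Sum>i=0..n. of_nat (n choose i) * of_nat (Stirling i m) * of_nat (Stirling (n - i) k))"
    unfolding sum_distrib_left
    by (rule sum.cong) (simp_all add: binomial_fact)
  finally show ?thesis .
qed

lemma fps_nth_scaled_X_power_mult:
  fixes a :: "'a::comm_ring_1"
  shows "(of_nat c * (fps_const a * fps_X) ^ l * G) $ n = of_nat c * a ^ l * (if n < l then 0 else G $ (n - l))"
proof -
  have "of_nat c * (fps_const a * fps_X) ^ l * G = fps_const (of_nat c * a ^ l) * (fps_X ^ l * G)"
    by (simp add: power_mult_distrib mult_ac flip: fps_of_nat fps_const_mult)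
  then show ?thesis
    by (simp add: fps_X_power_mult_nth)
qed

lemma ext_stirling2_of_nat:
  "ext_stirling2 r (int a) (int b) = fact a / fact b * ((fps_exp 1 - 1 + fps_const r * fps_X) ^ b) $ a"
  by (simp add: ext_stirling2_def)

lemma Stirling_eq_sum_ext_stirling2:
  "real (Stirling n m) =
     (\<Sum>l=0..m. real (n choose l) * (-1) ^ l * r ^ l * ext_stirling2 r (int n - int l) (int m - int l))"
proof -
  define F where "F = fps_exp 1 - 1 + fps_const r * fps_X"
  have "fps_exp 1 - 1 = fps_const (-r) * fps_X + F"
    by (simp add: F_def flip: fps_const_neg)
  then have coeff: "((fps_exp 1 - 1) ^ m) $ n =
      (\<Sum>l\<le>m. of_nat (m choose l) * (-r) ^ l * (if n < l then 0 else (F ^ (m - l)) $ (n - l)))"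
    by (simp only: binomial_ring fps_sum_nth fps_nth_scaled_X_power_mult)
  have "real (Stirling n m) = fact n / fact m * ((fps_exp 1 - 1) ^ m) $ n"
    by (simp add: fps_exp_minus_one_power_nth)
  also have "\<dots> = (\<Sum>l=0..m. real (n choose l) * (-1) ^ l * r ^ l * ext_stirling2 r (int n - int l) (int m - int l))"
    unfolding coeff sum_distrib_left atMost_atLeast0
  proof (rule sum.cong[OF refl])
    fix l assume "l \<in> {0..m}"
    then have "l \<le> m" by simp
    show "fact n / fact m * (of_nat (m choose l) * (-r) ^ l * (if n < l then 0 else (F ^ (m - l)) $ (n - l))) =
        real (n choose l) * (-1) ^ l * r ^ l * ext_stirling2 r (int n - int l) (int m - int l)"
    proof (cases "n < l")
      case True
      then show ?thesis by (simp add: ext_stirling2_def)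
    next
      case False
      then have "int n - int l = int (n - l)" "int m - int l = int (m - l)"
        using \<open>l \<le> m\<close> by auto
      then have "ext_stirling2 r (int n - int l) (int m - int l) = fact (n - l) / fact (m - l) * (F ^ (m - l)) $ (n - l)"
        unfolding F_def by (simp only: ext_stirling2_of_nat)
      then show ?thesis
        using False \<open>l \<le> m\<close> by (simp add: binomial_fact power_minus[of r] field_simps)
    qed
  qed
  finally show ?thesis .
qed

lemma Stirling_product_eq_double_sum_ext_stirling2:
  assumes "n1 \<le> n"
  shows "real (n choose n1) * real (Stirling n1 m) * real (Stirling (n - n1) k) =
    (\<Sum>l = 0..m. \<Sum>j = 0..k.
       real (n1 choose l) * real ((n - n1) choose j) * real (n choose n1) *
       (-1) ^ (l + j) * r ^ (l + j) *
       ext_stirling2 r (int n1 - int l) (int m - int l) *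
       ext_stirling2 r (int n - int n1 - int j) (int k - int j))"
proof -
  have "int n - int n1 = int (n - n1)"
    using assms by simp
  then show ?thesis
    unfolding Stirling_eq_sum_ext_stirling2[of n1 m r] Stirling_eq_sum_ext_stirling2[of "n - n1" k r]
    by (simp only: sum_product sum_distrib_left power_add mult_ac)
qed

theorem mainTheorem7:
  fixes r :: real and n m k :: nat
  assumes "n \<ge> m + k"
  shows "real ((k + m) choose m) * real (Stirling n (m + k)) =
    (\<Sum>n1 = m..n. \<Sum>l = 0..m. \<Sum>j = 0..k.
       real (n1 choose l) * real ((n - n1) choose j) * real (n choose n1) *
       (-1) ^ (l + j) * r ^ (l + j) *
       ext_stirling2 r (int n1 - int l) (int m - int l) *
       ext_stirling2 r (int n - int n1 - int j) (int k - int j))"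
proof -
  have "real ((k + m) choose m) * real (Stirling n (m + k)) =
      (\<Sum>n1=m..n. real (n choose n1) * real (Stirling n1 m) * real (Stirling (n - n1) k))"
    unfolding Stirling_convolution
    by (rule sum.mono_neutral_right) auto \<comment> \<open>\<open>Stirling n1 m = 0\<close> for \<open>n1 < m\<close>\<close>
  also have "\<dots> = (\<Sum>n1 = m..n. \<Sum>l = 0..m. \<Sum>j = 0..k.
       real (n1 choose l) * real ((n - n1) choose j) * real (n choose n1) *
       (-1) ^ (l + j) * r ^ (l + j) *
       ext_stirling2 r (int n1 - int l) (int m - int l) *
       ext_stirling2 r (int n - int n1 - int j) (int k - int j))"
    by (rule sum.cong[OF refl], rule Stirling_product_eq_double_sum_ext_stirling2) simp
  finally show ?thesis .
qed

end
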